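(* Let $p>3$ be a prime. Then for each $k=1,2,\ldots,(p-1)/2$, $$\sum_{j=0}^{p-2k}\binom{-k}{k+j}\frac{(-1)^{k+j}}{\binom{k+j}{k}}\equiv\frac{3k}{2}\sum_{j=1}^k\frac{\binom{2j}{j}}{j}-\frac32\binom{2k}{k}\pmod p.$$
   Context: For an integer $x$ and $n\in\mathbb{N}$, $\binom{x}{n}=x(x-1)\cdots(x-n+1)/n!$ (so $\binom{-k}{n}=(-1)^n\binom{k+n-1}{n}$). Congruences between rational numbers are understood in the ring of rationals whose denominators are coprime to $p$. *)

theory Defs
  imports Complex_Main "HOL-Computational_Algebra.Primes"
begin

definition rat_cong :: "rat \<Rightarrow> rat \<Rightarrow> nat \<Rightarrow> bool" where
  "rat_cong a b p \<longleftrightarrow>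
     (\<exists>m n :: int. \<not> int p dvd n \<and> a - b = of_int (int p * m) / of_int n)"

end

theory Submission
  imports Defs "HOL-Number_Theory.Residues"
begin

(*
  Put n = k + j. The j-th summand equals k (n+k-1)! (n-k)! / (n!)^2. The generalised
  Wilson congruence (p-1-m)! m! = (-1)^(m+1) (mod p) turns each factorial of size close
  to p into the reciprocal of a small one, so after the substitution n -> p - n the
  left-hand side is congruent to -k D_k, where
  D_k = sum_{n=k}^{p-k} (n-1)!^2 / ((n-k)! (n+k-1)!).
  D_1 is the harmonic sum H_{p-1} = 0 (mod p). In D_{k+1} - D_k the summands telescope
  against n!^2 / ((n-k)! (n+k)!), leaving two boundary terms, and Wilson again shows that
  D_{k+1} - D_k = -(3/2) C(2k,k) / k (mod p). Hence D_k = -(3/2) sum_{j<k} C(2j,j) / j,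
  which is the claim.
*)

definition summand_ratio :: "nat \<Rightarrow> nat \<Rightarrow> rat" where
  "summand_ratio k n = fact (n + k - 1) * fact (n - k) / fact n ^ 2"

definition dual_ratio :: "nat \<Rightarrow> nat \<Rightarrow> rat" where
  "dual_ratio k n = fact (n - 1) ^ 2 / (fact (n - k) * fact (n + k - 1))"

definition telescope_ratio :: "nat \<Rightarrow> nat \<Rightarrow> rat" where
  "telescope_ratio k n = fact n ^ 2 / (fact (n - k) * fact (n + k))"

definition dual_sum :: "nat \<Rightarrow> nat \<Rightarrow> rat" where
  "dual_sum p k = (\<Sum>n=k..p-k. dual_ratio k n)"

lemma gchoose_neg_div_choose_eq:
  assumes "1 \<le> k" "k \<le> m"
  shows "((- of_nat k :: rat) gchoose m) * (- 1) ^ m / of_nat (m choose k)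
    = of_nat k * summand_ratio k m"
proof -
  have "((- of_nat k :: rat) gchoose m) * (- 1) ^ m = of_nat ((k + m - 1) choose m)"
    using assms
    by (simp add: gbinomial_minus of_nat_diff binomial_gbinomial flip: power_mult_distrib)
  also have "\<dots> = fact (m + k - 1) / (fact m * fact (k - 1))"
    using binomial_fact[of m "k + m - 1", where 'a=rat] assms by (simp add: add.commute)
  also have "\<dots> = of_nat k * fact (m + k - 1) / (fact m * fact k)"
    using assms fact_reduce[of k, where 'a=rat] by simp
  finally show ?thesis
    using assms by (simp add: summand_ratio_def binomial_fact power2_eq_square)
qed

lemma sum_gchoose_neg_div_choose_eq:
  assumes "1 \<le> k"
  shows "(\<Sum>j=0..N. ((- of_nat k :: rat) gchoose (k + j)) * (- 1) ^ (k + j)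
      / of_nat ((k + j) choose k))
    = of_nat k * (\<Sum>n=k..k+N. summand_ratio k n)"
proof -
  have "(\<Sum>n=k..k+N. summand_ratio k n) = (\<Sum>j=0..N. summand_ratio k (k + j))"
    using sum.shift_bounds_cl_nat_ivl[of "summand_ratio k" 0 k N] by (simp add: add.commute)
  then show ?thesis
    using assms by (simp add: sum_distrib_left gchoose_neg_div_choose_eq)
qed

lemma central_binomial_div_eq:
  assumes "1 \<le> k"
  shows "of_nat ((2 * k) choose k) / of_nat k
    = (2 * fact (2 * k - 1) / fact k ^ 2 :: 'a :: field_char_0)"
proof -
  have "fact (2 * k) = (of_nat (2 * k) * fact (2 * k - 1) :: 'a)"
    using assms by (intro fact_reduce) simp
  moreover have "of_nat ((2 * k) choose k) = (fact (2 * k) / (fact k * fact k) :: 'a)"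
    using binomial_fact[of k "2 * k"] by (simp add: mult_2)
  ultimately show ?thesis
    using assms by (simp add: power2_eq_square)
qed

lemma dual_ratio_1: "1 \<le> n \<Longrightarrow> dual_ratio 1 n = 1 / of_nat n"
  unfolding dual_ratio_def using fact_reduce[of n, where 'a=rat] by (simp add: power2_eq_square)

lemma dual_ratio_diagonal: "1 \<le> k \<Longrightarrow> dual_ratio k k = 2 / of_nat k * telescope_ratio k k"
  unfolding dual_ratio_def telescope_ratio_def
  using fact_reduce[of k, where 'a=rat] fact_reduce[of "k + k", where 'a=rat]
  by (simp add: field_simps power2_eq_square)

lemma dual_ratio_Suc_diff:
  assumes "1 \<le> k" "k < n"
  shows "dual_ratio (Suc k) n - dual_ratio k n
    = - (2 / of_nat k) * (telescope_ratio k n - telescope_ratio k (n - 1))"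
proof -
  obtain a where n: "n = Suc (a + k)"
    using assms(2) by (metis add.commute less_iff_Suc_add)
  define X where "X = fact (a + k) ^ 2 / (fact a * fact (a + k + k) :: rat)"
  define A where "A = (of_nat (Suc a) :: rat)"
  define K where "K = (of_nat k :: rat)"
  have "A \<noteq> 0" "K \<noteq> 0" "A + 2 * K \<noteq> 0" "A * (A + 2 * K) \<noteq> 0"
    using assms(1) unfolding A_def K_def by auto
  then have identity:
      "X / (A + 2 * K) - X / A = - (2 / K) * (X * (A + K) ^ 2 / (A * (A + 2 * K)) - X)"
    by (simp add: field_simps power2_eq_square)
  have "dual_ratio (Suc k) n = X / (A + 2 * K)"
    unfolding dual_ratio_def X_def A_def K_def n by (simp add: field_simps)
  moreover have "dual_ratio k n = X / A"
    unfolding dual_ratio_def X_def A_def K_def n by (simp add: field_simps)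
  moreover have "telescope_ratio k n = X * (A + K) ^ 2 / (A * (A + 2 * K))"
    unfolding telescope_ratio_def X_def A_def K_def n by (simp add: field_simps power2_eq_square)
  moreover have "telescope_ratio k (n - 1) = X"
    unfolding telescope_ratio_def X_def n by simp
  ultimately show ?thesis
    using identity unfolding K_def by simp
qed

lemma sum_dual_ratio_Suc:
  assumes "1 \<le> k" "k \<le> N"
  shows "(\<Sum>n=Suc k..N. dual_ratio (Suc k) n)
    = (\<Sum>n=k..N. dual_ratio k n) - 2 / of_nat k * telescope_ratio k N"
  using assms(2)
proof (induction N rule: dec_induct)
  case base
  then show ?case
    using dual_ratio_diagonal[OF assms(1)] by simp
next
  case (step N)
  then show ?case
    using dual_ratio_Suc_diff[OF assms(1), of "Suc N"] by (simp add: algebra_simps)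
qed

lemma dual_sum_Suc:
  assumes "1 \<le> k" "2 * k + 2 \<le> p"
  shows "dual_sum p (Suc k)
    = dual_sum p k - (2 / of_nat k * telescope_ratio k (p - Suc k) + dual_ratio k (p - k))"
proof -
  have "p - k = Suc (p - Suc k)"
    using assms by simp
  then have "dual_sum p k = (\<Sum>n=k..p - Suc k. dual_ratio k n) + dual_ratio k (p - k)"
    unfolding dual_sum_def using assms by simp
  then show ?thesis
    using sum_dual_ratio_Suc[OF assms(1), of "p - Suc k"] assms by (simp add: dual_sum_def)
qed

(* The factors are shaped (p-1-m)! and 1/(p-1-m)!, as in the Wilson congruences below. *)
lemma telescope_correction_eq:
  assumes "1 \<le> k" "2 * k < p"
  shows "2 / of_nat k * telescope_ratio k (p - Suc k) + dual_ratio k (p - k)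
    = (2 * (of_nat p - 2 * of_nat k) + of_nat k) / of_nat k
      * fact (p - 1 - k) ^ 2 * (1 / fact (p - 1 - (2 * k - 1))) * (1 / fact (p - 1 - 0))"
proof -
  define F where "F = (fact (p - Suc k) :: rat)"
  define G where "G = (fact (p - Suc (2 * k)) :: rat)"
  define P where "P = (fact (p - 1) :: rat)"
  define q where "q = (of_nat p - 2 * of_nat k :: rat)"
  have "p - Suc k - k = p - Suc (2 * k)" "p - Suc k + k = p - 1"
    using assms by auto
  then have tele: "telescope_ratio k (p - Suc k) = F ^ 2 / (G * P)"
    unfolding telescope_ratio_def F_def G_def P_def by simp
  have qG: "fact (p - 1 - (2 * k - 1)) = q * G"
    using assms fact_reduce[of "p - 1 - (2 * k - 1)", where 'a=rat]
    unfolding q_def G_def by (simp add: of_nat_diff)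
  moreover have "p - k - k = p - 1 - (2 * k - 1)" "p - k + k - 1 = p - 1"
    using assms by auto
  ultimately have dual: "dual_ratio k (p - k) = F ^ 2 / (q * G * P)"
    unfolding dual_ratio_def F_def P_def by simp
  have "q \<noteq> 0" "(of_nat k :: rat) \<noteq> 0" "G \<noteq> 0" "P \<noteq> 0"
    using assms unfolding q_def G_def P_def by auto
  then have "2 / of_nat k * (F ^ 2 / (G * P)) + F ^ 2 / (q * G * P)
      = (2 * q + of_nat k) / of_nat k * F ^ 2 * (1 / (q * G)) * (1 / P)"
    by (simp add: field_simps)
  with tele dual qG show ?thesis
    unfolding P_def F_def q_def by simp
qed

definition p_integral :: "nat \<Rightarrow> rat \<Rightarrow> bool" where
  "p_integral p x \<longleftrightarrow> (\<exists>m n :: int. \<not> int p dvd n \<and> x = of_int m / of_int n)"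

lemma rat_cong_iff: "rat_cong a b p \<longleftrightarrow> (\<exists>z. p_integral p z \<and> a - b = of_nat p * z)"
  unfolding rat_cong_def p_integral_def
  by (metis of_int_mult of_int_of_nat_eq times_divide_eq_right)

context
  fixes p :: nat
  assumes prime: "prime p"
begin

lemma p_integral_of_int [simp]: "p_integral p (of_int m)"
  unfolding p_integral_def using prime by (intro exI[of _ m] exI[of _ 1]) auto

lemma p_integral_of_nat [simp]: "p_integral p (of_nat m)"
  using p_integral_of_int[of "int m"] by simp

lemma p_integral_0 [simp]: "p_integral p 0"
  using p_integral_of_int[of 0] by simp

lemma p_integral_1 [simp]: "p_integral p 1"
  using p_integral_of_int[of 1] by simp

lemma p_integral_fact [simp]: "p_integral p (fact m)"
  using p_integral_of_nat[of "fact m"] by simp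

lemma p_integral_add [intro]:
  assumes "p_integral p x" "p_integral p y" shows "p_integral p (x + y)"
proof -
  obtain a b c d :: int where ab: "\<not> int p dvd b" "x = of_int a / of_int b"
    and cd: "\<not> int p dvd d" "y = of_int c / of_int d"
    using assms unfolding p_integral_def by blast
  have "\<not> int p dvd b * d"
    using ab cd prime by (simp add: prime_dvd_mult_iff)
  moreover have "b \<noteq> 0" "d \<noteq> 0"
    using ab cd by auto
  then have "x + y = of_int (a * d + c * b) / of_int (b * d)"
    using ab cd by (simp add: field_simps)
  ultimately show ?thesis
    unfolding p_integral_def by blast
qed

lemma p_integral_mult [intro]:
  assumes "p_integral p x" "p_integral p y" shows "p_integral p (x * y)"
proof -
  obtain a b c d :: int where "\<not> int p dvd b" "x = of_int a / of_int b"
    and "\<not> int p dvd d" "y = of_int c / of_int d"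
    using assms unfolding p_integral_def by blast
  moreover from this have "\<not> int p dvd b * d"
    using prime by (simp add: prime_dvd_mult_iff)
  ultimately show ?thesis
    unfolding p_integral_def by (intro exI[of _ "a * c"] exI[of _ "b * d"]) auto
qed

lemma p_integral_uminus [intro]: "p_integral p x \<Longrightarrow> p_integral p (- x)"
  using p_integral_mult[OF p_integral_of_int[of "-1"]] by simp

lemma p_integral_diff [intro]: "p_integral p x \<Longrightarrow> p_integral p y \<Longrightarrow> p_integral p (x - y)"
  using p_integral_add[of x "- y"] by auto

lemma p_integral_power [intro]: "p_integral p x \<Longrightarrow> p_integral p (x ^ n)"
  by (induction n) auto

lemma p_integral_sum [intro]: "(\<And>i. i \<in> A \<Longrightarrow> p_integral p (f i)) \<Longrightarrow> p_integral p (sum f A)"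
  by (induction A rule: infinite_finite_induct) auto

lemma p_integral_inverse_of_nat: "\<not> p dvd n \<Longrightarrow> p_integral p (1 / of_nat n)"
  unfolding p_integral_def by (intro exI[of _ 1] exI[of _ "int n"]) auto

lemma p_integral_inverse_fact: "m < p \<Longrightarrow> p_integral p (1 / fact m)"
  using p_integral_inverse_of_nat[of "fact m"] prime_dvd_fact_iff[OF prime] by simp

lemma rat_cong_refl [simp]: "rat_cong a a p"
  unfolding rat_cong_iff by (intro exI[of _ 0]) simp

lemma rat_cong_sym: "rat_cong a b p \<Longrightarrow> rat_cong b a p"
  unfolding rat_cong_iff by (metis minus_diff_eq mult_minus_right p_integral_uminus)

lemma rat_cong_add:
  assumes "rat_cong a b p" "rat_cong c d p" shows "rat_cong (a + c) (b + d) p"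
proof -
  obtain y z where "p_integral p y" "a - b = of_nat p * y" "p_integral p z" "c - d = of_nat p * z"
    using assms unfolding rat_cong_iff by blast
  then show ?thesis
    unfolding rat_cong_iff by (intro exI[of _ "y + z"]) (auto simp: algebra_simps)
qed

lemma rat_cong_trans: "rat_cong a b p \<Longrightarrow> rat_cong b c p \<Longrightarrow> rat_cong a c p"
  using rat_cong_add[of a b b c] unfolding rat_cong_iff by auto

lemma rat_cong_uminus: "rat_cong a b p \<Longrightarrow> rat_cong (- a) (- b) p"
  unfolding rat_cong_iff by (metis minus_diff_minus mult_minus_right p_integral_uminus)

lemma rat_cong_diff: "rat_cong a b p \<Longrightarrow> rat_cong c d p \<Longrightarrow> rat_cong (a - c) (b - d) p"
  using rat_cong_add[of a b "- c" "- d"] rat_cong_uminus by simp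

lemma rat_cong_sum:
  "(\<And>i. i \<in> A \<Longrightarrow> rat_cong (f i) (g i) p) \<Longrightarrow> rat_cong (sum f A) (sum g A) p"
  by (induction A rule: infinite_finite_induct) (auto intro: rat_cong_add)

lemma rat_cong_mult_left:
  assumes "p_integral p c" "rat_cong a b p" shows "rat_cong (c * a) (c * b) p"
proof -
  obtain z where "p_integral p z" "a - b = of_nat p * z"
    using assms(2) unfolding rat_cong_iff by blast
  with assms(1) show ?thesis
    unfolding rat_cong_iff by (intro exI[of _ "c * z"]) (auto simp: algebra_simps)
qed

lemma rat_cong_p_integral: "rat_cong a b p \<Longrightarrow> p_integral p a \<Longrightarrow> p_integral p b"
  unfolding rat_cong_iff
  by (metis add_diff_cancel_left' diff_add_cancel p_integral_diff p_integral_mult p_integral_of_nat)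

lemma rat_cong_mult:
  assumes "rat_cong a b p" "rat_cong c d p" "p_integral p a" "p_integral p c"
  shows "rat_cong (a * c) (b * d) p"
proof -
  have "rat_cong (a * c) (a * d) p"
    using assms by (intro rat_cong_mult_left)
  moreover have "rat_cong (d * a) (d * b) p"
    using assms by (intro rat_cong_mult_left rat_cong_p_integral[of c d])
  ultimately show ?thesis
    by (auto simp: mult.commute intro: rat_cong_trans)
qed

lemma rat_cong_power: "rat_cong a b p \<Longrightarrow> p_integral p a \<Longrightarrow> rat_cong (a ^ n) (b ^ n) p"
  by (induction n) (auto intro: rat_cong_mult)

lemma rat_cong_cancel_left:
  assumes "rat_cong (c * a) (c * b) p" "p_integral p (1 / c)" "c \<noteq> 0"
  shows "rat_cong a b p"
  using rat_cong_mult_left[OF assms(2,1)] assms(3) by simp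

lemma rat_cong_of_int:
  assumes "[a = b] (mod int p)" shows "rat_cong (of_int a) (of_int b) p"
proof -
  obtain k where "a - b = int p * k"
    using assms by (auto simp: cong_iff_dvd_diff elim: dvdE)
  then show ?thesis
    unfolding rat_cong_iff
    by (intro exI[of _ "of_int k"])
      (metis of_int_diff of_int_mult of_int_of_nat_eq p_integral_of_int)
qed

lemma fact_mult_fact_cong:
  assumes "m < p" shows "[fact (p - 1 - m) * fact m = (- 1) ^ Suc m] (mod int p)"
  using assms
proof (induction m)
  case 0
  then show ?case
    using wilson_theorem[OF prime] by simp
next
  case (Suc m)
  define F where "F = (fact (p - 1 - m) * fact m :: int)"
  define X where "X = (fact (p - 1 - Suc m) * fact (Suc m) :: int)"
  let ?s = "int (Suc m)"
  have "p - 1 - m = Suc (p - 1 - Suc m)"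
    using Suc.prems by simp
  then have "F * ?s = (int p - ?s) * X"
    unfolding F_def X_def using Suc.prems by (simp add: of_nat_diff algebra_simps)
  then have "?s * X - ?s * (- 1) ^ Suc (Suc m) = int p * X - (F - (- 1) ^ Suc m) * ?s"
    by (simp add: algebra_simps)
  moreover have "int p dvd (F - (- 1) ^ Suc m) * ?s"
    using Suc unfolding F_def by (simp add: cong_iff_dvd_diff)
  ultimately have "[?s * X = ?s * (- 1) ^ Suc (Suc m)] (mod int p)"
    unfolding cong_iff_dvd_diff by (metis dvd_diff dvd_triv_left)
  moreover have "coprime p (Suc m)"
    using Suc.prems prime by (metis prime_imp_coprime dvd_imp_le zero_less_Suc not_le)
  then have "coprime ?s (int p)"
    by (metis coprime_commute coprime_int_iff)
  ultimately show ?case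
    unfolding X_def by (simp add: cong_mult_lcancel)
qed

lemma fact_mult_fact_rat_cong:
  assumes "m < p" shows "rat_cong (fact (p - 1 - m) * fact m) ((- 1) ^ Suc m) p"
  using rat_cong_of_int[OF fact_mult_fact_cong[OF assms]] by simp

lemma fact_rat_cong:
  assumes "m < p" shows "rat_cong (fact (p - 1 - m)) ((- 1) ^ Suc m / fact m) p"
  using rat_cong_mult_left[OF p_integral_inverse_fact fact_mult_fact_rat_cong, OF assms assms]
  by simp

lemma inverse_fact_rat_cong:
  assumes "m < p" shows "rat_cong (1 / fact (p - 1 - m)) ((- 1) ^ Suc m * fact m) p"
proof -
  have "p_integral p ((- 1) ^ Suc m * (1 / fact (p - 1 - m)))"
    using assms prime_gt_0_nat[OF prime]
    by (intro p_integral_mult p_integral_power p_integral_uminus p_integral_1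
        p_integral_inverse_fact) auto
  from rat_cong_mult_left[OF this fact_mult_fact_rat_cong[OF assms]]
  show ?thesis
    by (auto intro: rat_cong_sym simp flip: power_add)
qed

lemma harmonic_rat_cong_0:
  assumes "p > 2" shows "rat_cong (\<Sum>n=1..p-1. 1 / of_nat n) 0 p"
proof -
  define H where "H = (\<Sum>n=1..p-1. 1 / (of_nat n :: rat))"
  have "H = (\<Sum>n=1..p-1. 1 / of_nat (p - n))"
    unfolding H_def using assms by (subst sum.atLeastAtMost_rev) simp
  then have "2 * H = (\<Sum>n=1..p-1. 1 / of_nat n + 1 / of_nat (p - n))"
    unfolding sum.distrib H_def by (metis mult_2)
  also have "\<dots> = of_nat p * (\<Sum>n=1..p-1. 1 / of_nat (n * (p - n)))"
    unfolding sum_distrib_left by (rule sum.cong) (auto simp: of_nat_diff field_simps)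
  finally have "2 * H = of_nat p * (\<Sum>n=1..p-1. 1 / of_nat (n * (p - n)))" .
  moreover have "p_integral p (\<Sum>n=1..p-1. 1 / of_nat (n * (p - n)))"
    using prime by (intro p_integral_sum p_integral_inverse_of_nat)
      (auto simp: prime_dvd_mult_iff dest: dvd_imp_le)
  ultimately have "rat_cong (2 * H) (2 * 0) p"
    unfolding rat_cong_iff by (metis diff_zero mult_zero_right)
  moreover have "p_integral p (1 / 2)"
    using p_integral_inverse_of_nat[of 2] assms by (simp add: nat_dvd_not_less)
  ultimately show ?thesis
    unfolding H_def by (auto intro: rat_cong_cancel_left)
qed

lemma summand_ratio_reflect_cong:
  assumes "1 \<le> k" "k \<le> n" "n + k \<le> p"
  shows "rat_cong (summand_ratio k (p - n)) (- dual_ratio k n) p"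
proof -
  have "p - n + k - 1 = p - 1 - (n - k)" "p - n - k = p - 1 - (n + k - 1)" "p - n = p - 1 - (n - 1)"
    using assms by auto
  then have "summand_ratio k (p - n)
      = fact (p - 1 - (n - k)) * fact (p - 1 - (n + k - 1)) * (1 / fact (p - 1 - (n - 1))) ^ 2"
    unfolding summand_ratio_def by (simp add: power_divide)
  also have "rat_cong \<dots> ((- 1) ^ Suc (n - k) / fact (n - k)
      * ((- 1) ^ Suc (n + k - 1) / fact (n + k - 1)) * ((- 1) ^ Suc (n - 1) * fact (n - 1)) ^ 2) p"
    using assms prime
    by (intro rat_cong_mult rat_cong_power fact_rat_cong inverse_fact_rat_cong p_integral_mult
        p_integral_power p_integral_inverse_fact p_integral_fact) auto
  also have "(- 1) ^ Suc (n - k) / fact (n - k) * ((- 1) ^ Suc (n + k - 1) / fact (n + k - 1))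
      * ((- 1) ^ Suc (n - 1) * fact (n - 1)) ^ 2 = - dual_ratio k n"
  proof -
    have "Suc (n - k) + Suc (n + k - 1) = Suc (2 * n)"
      using assms by simp
    then have "(- 1 :: rat) ^ Suc (n - k) * (- 1) ^ Suc (n + k - 1) = - 1"
      by (simp flip: power_add)
    moreover have "((- 1 :: rat) ^ Suc (n - 1)) ^ 2 = 1"
      by (simp add: power2_eq_square)
    ultimately show ?thesis
      unfolding dual_ratio_def by (simp add: power_mult_distrib field_simps)
  qed
  finally show ?thesis .
qed

lemma telescope_correction_cong:
  assumes "1 \<le> k" "2 * k < p"
  shows "rat_cong (2 / of_nat k * telescope_ratio k (p - Suc k) + dual_ratio k (p - k))
    (3 / 2 * (of_nat ((2 * k) choose k) / of_nat k)) p"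
proof -
  define c where "c = (2 * (of_nat p - 2 * of_nat k) + of_nat k) / (of_nat k :: rat)"
  have "c - (- 3) = of_nat p * (2 / of_nat k)"
    using assms unfolding c_def by (simp add: field_simps)
  moreover have "p_integral p (1 / of_nat k)"
    using assms by (intro p_integral_inverse_of_nat) (auto dest: dvd_imp_le)
  then have "p_integral p (2 / of_nat k)"
    using p_integral_mult[OF p_integral_of_nat[of 2]] by fastforce
  ultimately have c: "rat_cong c (- 3) p"
    unfolding rat_cong_iff by blast
  have "rat_cong
      (c * fact (p - 1 - k) ^ 2 * (1 / fact (p - 1 - (2 * k - 1))) * (1 / fact (p - 1 - 0)))
      ((- 3) * ((- 1) ^ Suc k / fact k) ^ 2
        * ((- 1) ^ Suc (2 * k - 1) * fact (2 * k - 1)) * ((- 1) ^ Suc 0 * fact 0)) p"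
    using assms rat_cong_p_integral[OF rat_cong_sym[OF c]] p_integral_of_int[of "- 3"]
    by (intro rat_cong_mult rat_cong_power fact_rat_cong inverse_fact_rat_cong c p_integral_mult
        p_integral_power p_integral_inverse_fact p_integral_fact) auto
  moreover have "(- 3) * ((- 1) ^ Suc k / fact k) ^ 2 * ((- 1) ^ Suc (2 * k - 1) * fact (2 * k - 1))
      * ((- 1) ^ Suc 0 * fact 0) = 3 / 2 * (of_nat ((2 * k) choose k) / of_nat k :: rat)"
    using assms central_binomial_div_eq[OF assms(1), where 'a=rat]
    by (simp add: power_divide power2_eq_square)
  ultimately show ?thesis
    using telescope_correction_eq[OF assms] unfolding c_def by simp
qed

lemma dual_sum_cong:
  assumes "1 \<le> k" "2 * k + 1 \<le> p"
  shows "rat_cong (dual_sum p k) (- (3 / 2) * (\<Sum>j=1..<k. of_nat ((2 * j) choose j) / of_nat j)) p"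
  using assms
proof (induction k rule: nat_induct_at_least)
  case base
  have "dual_sum p 1 = (\<Sum>n=1..p-1. 1 / of_nat n)"
    unfolding dual_sum_def by (rule sum.cong[OF refl], rule dual_ratio_1) auto
  then show ?case
    using harmonic_rat_cong_0 base by simp
next
  case (Suc k)
  have "dual_sum p (Suc k)
      = dual_sum p k - (2 / of_nat k * telescope_ratio k (p - Suc k) + dual_ratio k (p - k))"
    using Suc by (intro dual_sum_Suc) auto
  moreover have "- (3 / 2) * (\<Sum>j=1..<Suc k. of_nat ((2 * j) choose j) / of_nat j)
      = - (3 / 2) * (\<Sum>j=1..<k. of_nat ((2 * j) choose j) / of_nat j)
        - 3 / 2 * (of_nat ((2 * k) choose k) / of_nat k :: rat)"
    using Suc by (simp add: algebra_simps)
  ultimately show ?case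
    using Suc by (simp only:) (intro rat_cong_diff telescope_correction_cong; simp)
qed

lemma summand_sum_cong:
  assumes "1 \<le> k" "2 * k + 1 \<le> p"
  shows "rat_cong (\<Sum>n=k..p-k. summand_ratio k n)
    (3 / 2 * (\<Sum>j=1..<k. of_nat ((2 * j) choose j) / of_nat j)) p"
proof -
  have "(\<Sum>n=k..p-k. summand_ratio k n) = (\<Sum>n=k..p-k. summand_ratio k (p - n))"
    using assms by (subst sum.atLeastAtMost_rev) simp
  moreover have "rat_cong (\<Sum>n=k..p-k. summand_ratio k (p - n)) (\<Sum>n=k..p-k. - dual_ratio k n) p"
    using assms by (intro rat_cong_sum summand_ratio_reflect_cong) auto
  moreover have "(\<Sum>n=k..p-k. - dual_ratio k n) = - dual_sum p k"
    by (simp add: dual_sum_def sum_negf)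
  moreover have "rat_cong (- dual_sum p k)
      (- (- (3 / 2) * (\<Sum>j=1..<k. of_nat ((2 * j) choose j) / of_nat j))) p"
    using assms by (intro rat_cong_uminus dual_sum_cong)
  ultimately show ?thesis
    by (auto intro: rat_cong_trans)
qed

end

theorem lemma2p4:
  fixes p k :: nat
  assumes "prime p" and "p > 3" and "1 \<le> k" and "k \<le> (p - 1) div 2"
  shows "rat_cong
    (\<Sum>j=0..p - 2*k. ((- of_nat k :: rat) gchoose (k + j)) * (-1) ^ (k + j)
                        / of_nat ((k + j) choose k))
    (3 * of_nat k / 2 * (\<Sum>j=1..k. of_nat ((2*j) choose j) / of_nat j)
       - 3 / 2 * of_nat ((2*k) choose k))
    p"
proof -
  let ?S = "\<Sum>j=1..<k. of_nat ((2 * j) choose j) / (of_nat j :: rat)"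
  have k: "2 * k + 1 \<le> p"
    using assms(2,4) by linarith
  have lhs: "(\<Sum>j=0..p - 2*k. ((- of_nat k :: rat) gchoose (k + j)) * (-1) ^ (k + j)
      / of_nat ((k + j) choose k)) = of_nat k * (\<Sum>n=k..p-k. summand_ratio k n)"
    using sum_gchoose_neg_div_choose_eq[OF assms(3), of "p - 2 * k"] k by simp
  have rhs: "3 * of_nat k / 2 * (\<Sum>j=1..k. of_nat ((2*j) choose j) / of_nat j)
      - 3 / 2 * of_nat ((2*k) choose k) = of_nat k * (3 / 2 * ?S)"
    using assms(3) by (simp add: sum.last_plus field_simps)
  show ?thesis
    unfolding lhs rhs using assms(1,3) k by (intro rat_cong_mult_left summand_sum_cong) auto
qed

end
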